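(* Consider a power allocation game among countries $\mathbf{n}=\{1,\dots,n\}$ on a simple undirected signed graph, with friend sets $\mathcal{F}_i$ (with $i\in\mathcal{F}_i$), adversary sets $\mathcal{A}_i$ ($\mathcal{F}_i\cap\mathcal{A}_i=\emptyset$) and total powers $p_i\ge 0$. Then for every strategy matrix $U=[u_{ij}]\in\mathcal{U}$ there exists a country $i\in\mathbf{n}$ with $x_i(U)\in\{\text{safe},\text{precarious}\}$, i.e. with $\sum_{j\in\mathcal{F}_i}u_{ji}+\sum_{j\in\mathcal{A}_i}u_{ij}\ \ge\ \sum_{j\in\mathcal{A}_i}u_{ji}$. (This holds for every strategy matrix, whether or not it is an equilibrium.)
   Context: Power allocation game (PAG): $n$ countries are the vertices of a simple undirected signed graph; an edge $(i,j)$ labelled $+$ means $i,j$ are friends, labelled $-$ means adversaries. For each $i$, $\mathcal{F}_i$ is the set of friends of $i$, with the convention $i\in\mathcal{F}_i$, and $\mathcal{A}_i$ the set of adversaries; these are disjoint. Country $i$ has total power $p_i\ge 0$. A strategy matrix is a nonnegative $n\times n$ matrix $U=[u_{ij}]$ with $\sum_{j}u_{ij}=p_i$ for each $i$ and $u_{ij}=0$ whenever $j\notin\mathcal{F}_i\cup\mathcal{A}_i$; $\mathcal{U}$ is the set of all strategy matrices. The total support of $i$ is $\sigma_i(U)=\sum_{j\in\mathcal{F}_i}u_{ji}+\sum_{j\in\mathcal{A}_i}u_{ij}$ and the total threat is $\tau_i(U)=\sum_{j\in\mathcal{A}_i}u_{ji}$. The state $x_i(U)$ is safe if $\sigma_i(U)>\tau_i(U)$,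 precarious if $\sigma_i(U)=\tau_i(U)$, unsafe if $\sigma_i(U)<\tau_i(U)$. *)

theory Defs
  imports Main "HOL-Library.Multiset" Complex_Main
begin

definition signed_graph :: "nat \<Rightarrow> (nat \<Rightarrow> nat set) \<Rightarrow> (nat \<Rightarrow> nat set) \<Rightarrow> bool" where
  "signed_graph n Fr Ad \<longleftrightarrow>
     (\<forall>i\<in>{1..n}. Fr i \<subseteq> {1..n} \<and> Ad i \<subseteq> {1..n} \<and> i \<in> Fr i \<and> i \<notin> Ad i
        \<and> Fr i \<inter> Ad i = {}) \<and>
     (\<forall>i\<in>{1..n}. \<forall>j\<in>{1..n}. (j \<in> Fr i \<longleftrightarrow> i \<in> Fr j) \<and> (j \<in> Ad i \<longleftrightarrow> i \<in> Ad j))"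

definition strategy_matrix ::
  "nat \<Rightarrow> (nat \<Rightarrow> nat set) \<Rightarrow> (nat \<Rightarrow> nat set) \<Rightarrow> (nat \<Rightarrow> real) \<Rightarrow> (nat \<Rightarrow> nat \<Rightarrow> real) \<Rightarrow> bool" where
  "strategy_matrix n Fr Ad p U \<longleftrightarrow>
     (\<forall>i\<in>{1..n}. \<forall>j\<in>{1..n}. U i j \<ge> 0) \<and>
     (\<forall>i\<in>{1..n}. (\<Sum>j\<in>{1..n}. U i j) = p i) \<and>
     (\<forall>i\<in>{1..n}. \<forall>j\<in>{1..n}. j \<notin> Fr i \<union> Ad i \<longrightarrow> U i j = 0)"

definition support :: "(nat \<Rightarrow> nat set) \<Rightarrow> (nat \<Rightarrow> nat set) \<Rightarrow> (nat \<Rightarrow> nat \<Rightarrow> real) \<Rightarrow> nat \<Rightarrow> real" where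
  "support Fr Ad U i = (\<Sum>j\<in>Fr i. U j i) + (\<Sum>j\<in>Ad i. U i j)"

definition threat :: "(nat \<Rightarrow> nat set) \<Rightarrow> (nat \<Rightarrow> nat \<Rightarrow> real) \<Rightarrow> nat \<Rightarrow> real" where
  "threat Ad U i = (\<Sum>j\<in>Ad i. U j i)"

definition safe where "safe Fr Ad U i \<longleftrightarrow> support Fr Ad U i > threat Ad U i"
definition precarious where "precarious Fr Ad U i \<longleftrightarrow> support Fr Ad U i = threat Ad U i"
definition unsafe where "unsafe Fr Ad U i \<longleftrightarrow> support Fr Ad U i < threat Ad U i"

end

theory Submission
  imports Defs
begin

text \<open>Every unit of power a country directs at an adversary is counted once as threat (to the
  target) and once as support (of the sender). As adversity is symmetric, the total threat
  equals the total hostile allocation, which is at most the total support.\<close>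

lemma sum_threat_eq_sum_hostile_allocation:
  assumes "finite V"
    and "\<And>i. i \<in> V \<Longrightarrow> Ad i \<subseteq> V"
    and "\<And>i j. i \<in> V \<Longrightarrow> j \<in> V \<Longrightarrow> j \<in> Ad i \<longleftrightarrow> i \<in> Ad j"
  shows "(\<Sum>i\<in>V. threat Ad U i) = (\<Sum>i\<in>V. \<Sum>j\<in>Ad i. U i j)"
proof -
  have "(\<Sum>i\<in>V. threat Ad U i) = (\<Sum>i\<in>V. \<Sum>j\<in>{j\<in>V. j \<in> Ad i}. U j i)"
  proof (rule sum.cong)
    fix i assume "i \<in> V"
    then have "Ad i = {j\<in>V. j \<in> Ad i}" using assms(2) by blast
    then show "threat Ad U i = (\<Sum>j\<in>{j\<in>V. j \<in> Ad i}. U j i)"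
      unfolding threat_def by simp
  qed simp
  also have "\<dots> = (\<Sum>j\<in>V. \<Sum>i\<in>{i\<in>V. j \<in> Ad i}. U j i)"
    using assms(1) by (intro sum.swap_restrict) auto
  also have "\<dots> = (\<Sum>j\<in>V. \<Sum>i\<in>Ad j. U j i)"
  proof (rule sum.cong)
    fix j assume "j \<in> V"
    then have "{i\<in>V. j \<in> Ad i} = Ad j" using assms(2,3) by blast
    then show "(\<Sum>i\<in>{i\<in>V. j \<in> Ad i}. U j i) = (\<Sum>i\<in>Ad j. U j i)" by simp
  qed simp
  finally show ?thesis .
qed

lemma sum_hostile_allocation_le_sum_support:
  assumes "\<And>i j. i \<in> V \<Longrightarrow> j \<in> Fr i \<Longrightarrow> U j i \<ge> 0"
  shows "(\<Sum>i\<in>V. \<Sum>j\<in>Ad i. U i j) \<le> (\<Sum>i\<in>V. support Fr Ad U i)"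
  unfolding support_def using assms by (intro sum_mono) (simp add: sum_nonneg)

theorem lemma1:
  fixes n :: nat and Fr Ad :: "nat \<Rightarrow> nat set" and p :: "nat \<Rightarrow> real"
    and U :: "nat \<Rightarrow> nat \<Rightarrow> real"
  assumes "n \<ge> 1"
    and "signed_graph n Fr Ad"
    and "\<forall>i\<in>{1..n}. p i \<ge> 0"
    and "strategy_matrix n Fr Ad p U"
  shows "\<exists>i\<in>{1..n}. safe Fr Ad U i \<or> precarious Fr Ad U i"
proof (rule ccontr)
  assume "\<not> ?thesis"
  then have unsafe: "\<And>i. i \<in> {1..n} \<Longrightarrow> support Fr Ad U i < threat Ad U i"
    unfolding safe_def precarious_def by (meson linorder_neqE_linordered_idom)
  have "(\<Sum>i\<in>{1..n}. support Fr Ad U i) < (\<Sum>i\<in>{1..n}. threat Ad U i)"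
    using assms(1) unsafe by (intro sum_strict_mono) auto
  also have "\<dots> = (\<Sum>i\<in>{1..n}. \<Sum>j\<in>Ad i. U i j)"
    using assms(2) unfolding signed_graph_def
    by (intro sum_threat_eq_sum_hostile_allocation) auto
  also have "\<dots> \<le> (\<Sum>i\<in>{1..n}. support Fr Ad U i)"
    using assms(2,4) unfolding signed_graph_def strategy_matrix_def
    by (intro sum_hostile_allocation_le_sum_support) blast
  finally show False by simp
qed

end
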